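(* For all positive integers $\alpha_1,\alpha_2,\alpha_3$ and all $n\ge 0$, $$|P_n^2|\le [x^{n(\alpha_1+\alpha_2+\alpha_3)}]\left(\frac{1}{1-x^{\alpha_1}-x^{\alpha_2}-x^{\alpha_3}+x^{\alpha_1+\alpha_3}+2x^{\alpha_1+2\alpha_2+\alpha_3}}\right).$$
   Context: A system of $2$ stacks in series consists of an input queue, stack 1, stack 2, and an output queue. Moves: $m_1$ moves the front of the input queue onto stack 1; $m_2$ pops stack 1 and pushes onto stack 2; $m_3$ pops stack 2 and enqueues at the back of the output queue; a move is illegal if its source is empty. $P_n^2\subseteq S_n$ is the set of $\pi$ such that some legal sequence of moves, starting with $1,\dots,n$ (front to back) in the input queue and everything else empty, ends with $\pi(1),\dots,\pi(n)$ (front to back) in the output queue and everything else empty. $[x^N]F$ denotes the coefficient of $x^N$ in the power series $F$. *)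

theory Defs
  imports "HOL-Combinatorics.Permutations" "HOL-Computational_Algebra.Formal_Power_Series"
begin

text \<open>States of the two-stacks-in-series machine:
  (input queue front-to-back, stack 1 top-first, stack 2 top-first, output queue front-to-back).\<close>
type_synonym state = "nat list \<times> nat list \<times> nat list \<times> nat list"

inductive move :: "state \<Rightarrow> state \<Rightarrow> bool" where
  m1: "move (x # inp, s1, s2, out) (inp, x # s1, s2, out)"
| m2: "move (inp, x # s1, s2, out) (inp, s1, x # s2, out)"
| m3: "move (inp, s1, x # s2, out) (inp, s1, s2, out @ [x])"

definition P2 :: "nat \<Rightarrow> (nat \<Rightarrow> nat) set" where
  "P2 n = {\<pi>. \<pi> permutes {1..n} \<and>
     move\<^sup>*\<^sup>* ([1..<n+1], [], [], []) ([], [], [], map \<pi> [1..<n+1])}"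

end

theory Submission
  imports Defs
begin

(* A legal computation of the machine is a word over the three moves.  Reading words
   latest-move-first, three commutation relations hold between move words (a move m1 followed by
   m3 has the effect of m3 followed by m1, and two relations of length four); each strictly decreases a potential, so every executable word can be
   rewritten into an equivalent "good" word containing none of the three left-hand sides.  A
   computation sorting 1..n into pi uses exactly n moves of each kind, so pi is the output of a good
   word of weight n(a1+a2+a3) when the moves m1, m2, m3 weigh a1, a2, a3; hence |P_n^2| is at most
   the number of such good words.  Splitting good words by their first letter gives a linear
   recursion for this number whose characteristic series is exactly the denominator in the
   statement, so the number equals the requested coefficient. *)

datatype letter = L1 | L2 | L3

fun step :: "letter \<Rightarrow> state \<Rightarrow> state option" where
  "step L1 (x # inp, s1, s2, out) = Some (inp, x # s1, s2, out)"
| "step L2 (inp, x # s1, s2, out) = Some (inp, s1, x # s2, out)"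
| "step L3 (inp, s1, x # s2, out) = Some (inp, s1, s2, out @ [x])"
| "step _ _ = None"

text \<open>Run a word of moves, read latest move first: \<open>run (l # r)\<close> performs \<open>r\<close>, then \<open>l\<close>.\<close>
fun run :: "letter list \<Rightarrow> state \<Rightarrow> state option" where
  "run [] s = Some s"
| "run (l # r) s = Option.bind (run r s) (step l)"

lemma run_append: "run (r1 @ r2) s = Option.bind (run r2 s) (run r1)"
  by (induction r1) auto

lemma move_step: "move s t \<Longrightarrow> \<exists>l. step l s = Some t"
  by (induction rule: move.induct) (metis step.simps)+

lemma reachable_run: "move\<^sup>*\<^sup>* s t \<Longrightarrow> \<exists>r. run r s = Some t"
proof (induction rule: rtranclp_induct)
  case base
  have "run [] s = Some s" by simp
  then show ?case by blast
next
  case (step t u)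
  then obtain r l where "run r s = Some t" "step l t = Some u" using move_step by blast
  then have "run (l # r) s = Some u" by simp
  then show ?case by blast
qed

text \<open>Pairs \<open>(p, q)\<close> of words with the same effect; \<open>p\<close> is the pattern good words avoid.\<close>
definition commutations :: "(letter list \<times> letter list) set" where
  "commutations = {([L3, L1], [L1, L3]), ([L3, L2, L1, L2], [L2, L3, L2, L1]),
                   ([L3, L2, L2, L1], [L2, L1, L3, L2])}"

lemma run_commutation:
  assumes "(p, q) \<in> commutations" shows "run q s = run p s"
proof -
  obtain inp s1 s2 out where "s = (inp, s1, s2, out)" by (cases s)
  moreover have "run q (inp, s1, s2, out) = run p (inp, s1, s2, out)"
    using assms unfolding commutations_def
    by (cases inp; cases s1; cases s2) auto
  ultimately show ?thesis by simp
qed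

text \<open>The words that may not follow the letter \<open>L3\<close> in a good word: exactly the words \<open>u\<close>
  such that \<open>L3 # u\<close> begins with the left-hand side of a commutation.\<close>
fun blocked :: "letter list \<Rightarrow> bool" where
  "blocked (L1 # _) = True"
| "blocked (L2 # L1 # L2 # _) = True"
| "blocked (L2 # L2 # L1 # _) = True"
| "blocked _ = False"

fun good :: "letter list \<Rightarrow> bool" where
  "good [] = True"
| "good (l # r) = (good r \<and> \<not> (l = L3 \<and> blocked r))"

lemma blocked_commutation:
  assumes "blocked r" shows "\<exists>p q u. L3 # r = p @ u \<and> (p, q) \<in> commutations"
proof (cases r rule: blocked.cases)
  case (1 u)
  then show ?thesis
    by (intro exI[of _ "[L3, L1]"] exI[of _ "[L1, L3]"] exI[of _ u]) (simp add: commutations_def)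
next
  case (2 u)
  then show ?thesis
    by (intro exI[of _ "[L3, L2, L1, L2]"] exI[of _ "[L2, L3, L2, L1]"] exI[of _ u])
      (simp add: commutations_def)
next
  case (3 u)
  then show ?thesis
    by (intro exI[of _ "[L3, L2, L2, L1]"] exI[of _ "[L2, L1, L3, L2]"] exI[of _ u])
      (simp add: commutations_def)
qed (use assms in auto)

lemma not_good_factor:
  "\<not> good r \<Longrightarrow> \<exists>r1 p q r2. r = r1 @ p @ r2 \<and> (p, q) \<in> commutations"
proof (induction r)
  case Nil
  then show ?case by simp
next
  case (Cons l r)
  show ?case
  proof (cases "good r")
    case True
    with Cons.prems have "l = L3" "blocked r" by auto
    then obtain p q u where "l # r = p @ u" "(p, q) \<in> commutations"
      using blocked_commutation by blast
    then show ?thesis by (intro exI[of _ "[]"] exI[of _ p] exI[of _ q] exI[of _ u]) simp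
  next
    case False
    then obtain r1 p q r2 where "r = r1 @ p @ r2" "(p, q) \<in> commutations"
      using Cons.IH by blast
    then show ?thesis by (intro exI[of _ "l # r1"] exI[of _ p] exI[of _ q] exI[of _ r2]) simp
  qed
qed

text \<open>Sum over the occurrences of \<open>L3\<close> of the number of letters after them; every commutation
  moves an \<open>L3\<close> towards the end, so this terminates the rewriting to good words.\<close>
fun potential :: "letter list \<Rightarrow> nat" where
  "potential [] = 0"
| "potential (l # r) = (if l = L3 then length r else 0) + potential r"

lemma potential_append:
  "potential (xs @ ys) = potential xs + count (mset xs) L3 * length ys + potential ys"
  by (induction xs) auto

lemma potential_commutation:
  "(p, q) \<in> commutations \<Longrightarrow> potential (r1 @ q @ r2) < potential (r1 @ p @ r2)"
  unfolding commutations_def by (auto simp: potential_append)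

lemma mset_commutation: "(p, q) \<in> commutations \<Longrightarrow> mset q = mset p"
  unfolding commutations_def by (auto simp: add_mset_commute)

lemma good_normal_form:
  "run r s = Some t \<Longrightarrow> \<exists>r'. good r' \<and> run r' s = Some t \<and> mset r' = mset r"
proof (induction r rule: measure_induct_rule[of potential])
  case (less r)
  show ?case
  proof (cases "good r")
    case True
    then show ?thesis using less.prems by blast
  next
    case False
    then obtain r1 p q r2 where r: "r = r1 @ p @ r2" and pq: "(p, q) \<in> commutations"
      using not_good_factor by blast
    have "run (r1 @ q @ r2) s = run r s"
      unfolding r run_append run_commutation[OF pq] ..
    then have "run (r1 @ q @ r2) s = Some t" using less.prems by simp
    moreover have "potential (r1 @ q @ r2) < potential r"
      using r potential_commutation[OF pq] by simp
    ultimately obtain r' where "good r'" "run r' s = Some t" "mset r' = mset (r1 @ q @ r2)"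
      using less.IH by blast
    moreover have "mset (r1 @ q @ r2) = mset r"
      using r mset_commutation[OF pq] by simp
    ultimately show ?thesis by auto
  qed
qed

text \<open>Each move transfers one element between adjacent containers; hence the letter counts of a run
  are determined by the lengths of the containers before and after.\<close>
lemma step_lengths:
  assumes "step l (i, s1, s2, out) = Some (i', s1', s2', out')"
  shows "length i = length i' + count {#l#} L1 \<and>
     length s1' + count {#l#} L2 = length s1 + count {#l#} L1 \<and>
     length s2' + count {#l#} L3 = length s2 + count {#l#} L2 \<and>
     length out' = length out + count {#l#} L3"
  using assms by (cases l; cases i; cases s1; cases s2) auto

lemma run_letter_counts:
  "run r (i, s1, s2, out) = Some (i', s1', s2', out') \<Longrightarrow>
     length i = length i' + count (mset r) L1 \<and>
     length s1' + count (mset r) L2 = length s1 + count (mset r) L1 \<and>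
     length s2' + count (mset r) L3 = length s2 + count (mset r) L2 \<and>
     length out' = length out + count (mset r) L3"
proof (induction r arbitrary: i' s1' s2' out')
  case Nil
  then show ?case by simp
next
  case (Cons l r)
  then obtain i'' s1'' s2'' out'' where
    mid: "run r (i, s1, s2, out) = Some (i'', s1'', s2'', out'')" and
    last: "step l (i'', s1'', s2'', out'') = Some (i', s1', s2', out')"
    by (auto split: Option.bind_splits)
  from Cons.IH[OF mid] last show ?case
    using step_lengths[OF last] by (cases l) simp_all
qed

lemma permutation_eq_if_values_eq:
  assumes "\<pi> permutes {1..n}" "\<sigma> permutes {1..n}" "map \<pi> [1..<n+1] = map \<sigma> [1..<n+1]"
  shows "\<pi> = \<sigma>"
proof
  fix x
  show "\<pi> x = \<sigma> x"
  proof (cases "x \<in> {1..n}")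
    case True
    then show ?thesis using assms(3) by (auto simp: map_eq_conv simp del: upt_Suc)
  next
    case False
    then show ?thesis using permutes_not_in[OF assms(1)] permutes_not_in[OF assms(2)] by simp
  qed
qed

text \<open>The output queue after running a word (meaningful when the run succeeds).\<close>
definition final_output :: "letter list \<Rightarrow> state \<Rightarrow> nat list" where
  "final_output r s = snd (snd (snd (the (run r s))))"

lemma finite_letter_UNIV: "finite (UNIV :: letter set)"
proof -
  have letters: "(UNIV :: letter set) = {L1, L2, L3}" using letter.exhaust by auto
  show ?thesis unfolding letters by simp
qed

locale letter_weights =
  fixes c :: "letter \<Rightarrow> nat"
  assumes weight_pos: "0 < c l"
begin

definition weight :: "letter list \<Rightarrow> nat" where
  "weight r = sum_list (map c r)"

lemma weight_Nil [simp]: "weight [] = 0"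
  and weight_Cons [simp]: "weight (l # r) = c l + weight r"
  by (simp_all add: weight_def)

lemma length_le_weight: "length r \<le> weight r"
  using weight_pos by (induction r) (auto simp: Suc_le_eq add_strict_increasing)

lemma weight_letter_counts:
  "weight r = c L1 * count (mset r) L1 + c L2 * count (mset r) L2 + c L3 * count (mset r) L3"
proof (induction r)
  case (Cons l r)
  then show ?case by (cases l) auto
qed simp

text \<open>The good words of weight \<open>M\<close>; integer weights make the recursion uniform, as the sets
  are empty for negative \<open>M\<close>.\<close>
definition good_words :: "int \<Rightarrow> letter list set" where
  "good_words M = {r. good r \<and> int (weight r) = M}"

definition ngood :: "int \<Rightarrow> int" where
  "ngood M = int (card (good_words M))"

lemma finite_good_words: "finite (good_words M)"
proof (rule finite_subset)
  show "good_words M \<subseteq> {r. set r \<subseteq> UNIV \<and> length r \<le> nat M}"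
    unfolding good_words_def using length_le_weight by fastforce
  show "finite {r. set r \<subseteq> (UNIV :: letter set) \<and> length r \<le> nat M}"
    by (rule finite_lists_length_le[OF finite_letter_UNIV])
qed

lemma good_words_neg: "M < 0 \<Longrightarrow> good_words M = {}"
  unfolding good_words_def by auto

lemma good_words_0: "good_words 0 = {[]}"
proof -
  have "weight r = 0 \<Longrightarrow> r = []" for r
    using length_le_weight[of r] by simp
  then show ?thesis unfolding good_words_def by auto
qed

lemma good_words_split:
  assumes "0 < M"
  shows "good_words M = Cons L1 ` good_words (M - c L1) \<union> Cons L2 ` good_words (M - c L2)
           \<union> Cons L3 ` {u \<in> good_words (M - c L3). \<not> blocked u}"
proof (intro equalityI subsetI)
  fix r assume r: "r \<in> good_words M"
  with assms obtain l u where "r = l # u" unfolding good_words_def by (cases r) auto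
  with r show "r \<in> Cons L1 ` good_words (M - c L1) \<union> Cons L2 ` good_words (M - c L2)
           \<union> Cons L3 ` {u \<in> good_words (M - c L3). \<not> blocked u}"
    by (cases l) (auto simp: good_words_def)
qed (auto simp: good_words_def)

lemma blocked_good_words_split:
  "{u \<in> good_words K. blocked u} = Cons L1 ` good_words (K - c L1)
     \<union> (@) [L2, L1, L2] ` good_words (K - c L1 - 2 * c L2)
     \<union> (@) [L2, L2, L1] ` good_words (K - c L1 - 2 * c L2)"
proof (intro equalityI subsetI)
  fix r assume "r \<in> {u \<in> good_words K. blocked u}"
  then show "r \<in> Cons L1 ` good_words (K - c L1)
     \<union> (@) [L2, L1, L2] ` good_words (K - c L1 - 2 * c L2)
     \<union> (@) [L2, L2, L1] ` good_words (K - c L1 - 2 * c L2)"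
    by (cases r rule: blocked.cases) (auto simp: good_words_def)
qed (auto simp: good_words_def)

lemma card_blocked_good_words:
  "int (card {u \<in> good_words K. blocked u})
     = ngood (K - c L1) + 2 * ngood (K - c L1 - 2 * c L2)"
proof -
  let ?A = "good_words (K - c L1)" and ?B = "good_words (K - c L1 - 2 * c L2)"
  have "card {u \<in> good_words K. blocked u}
      = card (Cons L1 ` ?A) + card ((@) [L2, L1, L2] ` ?B) + card ((@) [L2, L2, L1] ` ?B)"
    unfolding blocked_good_words_split
    by (subst card_Un_disjoint; use finite_good_words in auto)+
  also have "\<dots> = card ?A + card ?B + card ?B"
    by (simp add: card_image inj_on_def)
  finally show ?thesis unfolding ngood_def by simp
qed

lemma ngood_rec:
  assumes "0 < M"
  shows "ngood M = ngood (M - c L1) + ngood (M - c L2) + ngood (M - c L3)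
           - ngood (M - c L3 - c L1) - 2 * ngood (M - c L3 - c L1 - 2 * c L2)"
proof -
  let ?C = "good_words (M - c L3)" and ?D = "{u \<in> good_words (M - c L3). blocked u}"
  have D: "?D \<subseteq> ?C" "finite ?D" using finite_good_words by auto
  have "card (good_words M) = card (good_words (M - c L1)) + card (good_words (M - c L2))
          + card (?C - ?D)"
  proof -
    have "{u \<in> ?C. \<not> blocked u} = ?C - ?D" by auto
    then show ?thesis unfolding good_words_split[OF assms]
      by (subst card_Un_disjoint; use finite_good_words in \<open>auto simp: card_image\<close>)+
  qed
  also have "card (?C - ?D) = card ?C - card ?D"
    by (rule card_Diff_subset[OF D(2) D(1)])
  finally show ?thesis
    using card_blocked_good_words[of "M - c L3"] card_mono[OF finite_good_words D(1)]
    unfolding ngood_def by simp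
qed

lemma ngood_neg: "M < 0 \<Longrightarrow> ngood M = 0"
  by (simp add: ngood_def good_words_neg)

lemma ngood_0: "ngood 0 = 1"
  by (simp add: ngood_def good_words_0)

lemma good_words_generating_function:
  "inverse (1 - fps_X ^ c L1 - fps_X ^ c L2 - fps_X ^ c L3 + fps_X ^ (c L1 + c L3)
            + 2 * fps_X ^ (c L1 + 2 * c L2 + c L3) :: 'a :: field fps)
     = Abs_fps (\<lambda>N. of_int (ngood (int N)))"
proof (rule fps_inverse_unique)
  define F :: "'a fps" where "F = Abs_fps (\<lambda>N. of_int (ngood (int N)))"
  have shift: "fps_nth (fps_X ^ k * F) N = of_int (ngood (int N - int k))" for k N
    by (simp add: fps_X_power_mult_nth F_def ngood_neg of_nat_diff)
  have "fps_nth ((1 - fps_X ^ c L1 - fps_X ^ c L2 - fps_X ^ c L3 + fps_X ^ (c L1 + c L3)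
            + 2 * fps_X ^ (c L1 + 2 * c L2 + c L3)) * F) N = fps_nth 1 N" for N
  proof -
    have "fps_nth ((1 - fps_X ^ c L1 - fps_X ^ c L2 - fps_X ^ c L3 + fps_X ^ (c L1 + c L3)
            + 2 * fps_X ^ (c L1 + 2 * c L2 + c L3)) * F) N
        = of_int (ngood (int N) - ngood (int N - c L1) - ngood (int N - c L2) - ngood (int N - c L3)
            + ngood (int N - (c L1 + c L3)) + 2 * ngood (int N - (c L1 + 2 * c L2 + c L3)))"
      unfolding mult_2 distrib_right left_diff_distrib mult_1_left fps_add_nth fps_sub_nth shift
      by (simp add: F_def)
    also have "\<dots> = fps_nth (1 :: 'a fps) N"
    proof (cases "N = 0")
      case True
      have "0 < c L1" "0 < c L2" "0 < c L3" by (rule weight_pos)+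
      with True show ?thesis by (simp add: ngood_0 ngood_neg)
    next
      case False
      then show ?thesis using ngood_rec[of "int N"] by (simp add: algebra_simps)
    qed
    finally show ?thesis .
  qed
  then show "(1 - fps_X ^ c L1 - fps_X ^ c L2 - fps_X ^ c L3 + fps_X ^ (c L1 + c L3)
            + 2 * fps_X ^ (c L1 + 2 * c L2 + c L3)) * F = 1"
    by (rule fps_ext)
qed

lemma P2_good_word:
  assumes "\<pi> \<in> P2 n"
  shows "\<exists>r \<in> good_words (int (n * (c L1 + c L2 + c L3))).
           run r ([1..<n+1], [], [], []) = Some ([], [], [], map \<pi> [1..<n+1])"
proof -
  from assms obtain r0 where r0: "run r0 ([1..<n+1], [], [], []) = Some ([], [], [], map \<pi> [1..<n+1])"
    unfolding P2_def using reachable_run by blast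
  then obtain r where r: "good r" "run r ([1..<n+1], [], [], []) = Some ([], [], [], map \<pi> [1..<n+1])"
    and mset: "mset r = mset r0"
    using good_normal_form by blast
  from run_letter_counts[OF r0]
  have "count (mset r0) L1 = n" "count (mset r0) L2 = n" "count (mset r0) L3 = n"
    by (auto simp del: upt_Suc)
  then have "weight r = n * (c L1 + c L2 + c L3)"
    unfolding weight_letter_counts mset by (simp add: algebra_simps)
  with r show ?thesis unfolding good_words_def by auto
qed

lemma card_P2_le_good_words: "card (P2 n) \<le> card (good_words (int (n * (c L1 + c L2 + c L3))))"
proof -
  let ?W = "good_words (int (n * (c L1 + c L2 + c L3)))"
  let ?values = "\<lambda>\<pi>. map \<pi> [1..<n+1]"
  have "inj_on ?values (P2 n)"
    by (rule inj_onI) (auto simp: P2_def intro: permutation_eq_if_values_eq)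
  then have "card (P2 n) = card (?values ` P2 n)"
    by (rule card_image[symmetric])
  also have "\<dots> \<le> card ((\<lambda>r. final_output r ([1..<n+1], [], [], [])) ` ?W)"
  proof (rule card_mono)
    show "finite ((\<lambda>r. final_output r ([1..<n+1], [], [], [])) ` ?W)"
      using finite_good_words by simp
    show "?values ` P2 n \<subseteq> (\<lambda>r. final_output r ([1..<n+1], [], [], [])) ` ?W"
      using P2_good_word by (force simp: final_output_def)
  qed
  also have "\<dots> \<le> card ?W"
    by (rule card_image_le[OF finite_good_words])
  finally show ?thesis .
qed

end

fun move_weights :: "nat \<Rightarrow> nat \<Rightarrow> nat \<Rightarrow> letter \<Rightarrow> nat" where
  "move_weights a1 a2 a3 L1 = a1"
| "move_weights a1 a2 a3 L2 = a2"
| "move_weights a1 a2 a3 L3 = a3"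

theorem proposition5:
  fixes a1 a2 a3 n :: nat
  assumes "a1 > 0" and "a2 > 0" and "a3 > 0"
  shows "real (card (P2 n)) \<le>
    fps_nth (inverse (1 - fps_X ^ a1 - fps_X ^ a2 - fps_X ^ a3 + fps_X ^ (a1 + a3)
                      + 2 * fps_X ^ (a1 + 2 * a2 + a3) :: real fps)) (n * (a1 + a2 + a3))"
proof -
  interpret letter_weights "move_weights a1 a2 a3"
  proof
    show "0 < move_weights a1 a2 a3 l" for l using assms by (cases l) simp_all
  qed
  have "real (card (P2 n)) \<le> real (card (good_words (int (n * (a1 + a2 + a3)))))"
    using card_P2_le_good_words[of n] by simp
  also have "\<dots> = fps_nth (inverse (1 - fps_X ^ a1 - fps_X ^ a2 - fps_X ^ a3 + fps_X ^ (a1 + a3)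
                      + 2 * fps_X ^ (a1 + 2 * a2 + a3) :: real fps)) (n * (a1 + a2 + a3))"
    using good_words_generating_function[where 'a = real] by (simp add: ngood_def)
  finally show ?thesis .
qed

end
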